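(* Let $\mathcal{G}=(\mathcal{N}_0,\mathcal{E})$ be a tree (radial distribution network) with node set $\mathcal{N}_0=\{0,1,\dots,n\}$, where node $0$ is the substation, and let $\mathcal{N}=\mathcal{N}_0\setminus\{0\}$. Each line $(h,k)\in\mathcal{E}$ has reactance $x_{hk}>0$. Define the $n\times n$ matrix $X$ by $X_{ij}=2\sum_{(h,k)\in P_i\cap P_j} x_{hk}$ for $i,j\in\mathcal{N}$, where $P_i$ is the set of lines on the unique path from node $0$ to node $i$. For each $i\in\mathcal{N}$ let $\underline{v}_i\le \bar{v}_i$ be given bounds, and let $g_i:\mathbb{R}\to\mathbb{R}$ be a decentralized control policy. Consider the closed-loop voltage dynamics $$\mathbf{v}(t)=X\mathbf{q}(t)+\mathbf{v}^{env},\qquad \dot{q}_i(t)=u_i(t)=g_i(v_i(t)),\quad i\in\mathcal{N},$$ where $\mathbf{v}^{env}\in\mathbb{R}^n$ is a constant vector, $\mathbf{q}(t)\in\mathbb{R}^n$ is the reactive power injection and $\mathbf{v}(t)\in\mathbb{R}^n$ the voltage magnitude vector. Suppose that for every $i\in\mathcal{N}$, $g_i$ is continuously differentiable, satisfies $g_i(v_i)=0$ for $v_i\in[\underline{v}_i,\bar{v}_i]$, is strictly monotonically decreasing on $(-\infty,\underline{v}_i]$ and on $[\bar{v}_i,\infty)$, and satisfies $\lim_{v_i\to\infty}|g_i(v_i)|=\infty$. Then the closed-loop system is voltage stable: for any $\mathbf{v}^{env}\in\mathbb{R}^n$ and any initial condition $\mathbf{v}(0)\in\mathbb{R}^n$,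 the trajectory satisfies $\lim_{t\to\infty}\mathrm{dist}(\mathbf{v}(t),S_v)=0$, where $S_v=\{\mathbf{v}\in\mathbb{R}^n:\underline{v}_i\le v_i\le \bar{v}_i \text{ for all } i\}$ and $\mathrm{dist}(\mathbf{v},S_v)=\min_{\mathbf{v}'\in S_v}\|\mathbf{v}-\mathbf{v}'\|$.
   Context: This is the linearized (Simplified DistFlow) model of a radial power distribution network: the voltage vector equals $X\mathbf{q}+\mathbf{v}^{env}$, where $\mathbf{v}^{env}$ collects the uncontrollable contributions (from active power injections and substation voltage), and each node's controller sets the rate of change of its reactive power injection as a function of its own local voltage only. In the paper the policies $g_i$ are parameterized as $g_{i,\theta_i}$ with parameters $\theta_i$; the parameterization plays no role in the statement. *)

theory Defs
  imports "HOL-Analysis.Analysis"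
begin

text \<open>A radial network (tree) rooted at the substation node 0 is encoded by a parent map on the
  non-substation nodes 'n (the set N): par i = None means the parent of i is the substation 0,
  par i = Some j means the parent is node j. The line (par i, i) is identified with its child node i.\<close>

fun par_iter :: "('n \<Rightarrow> 'n option) \<Rightarrow> nat \<Rightarrow> 'n \<Rightarrow> 'n option" where
  "par_iter par 0 i = Some i"
| "par_iter par (Suc k) i = Option.bind (par_iter par k i) par"

definition is_radial :: "('n \<Rightarrow> 'n option) \<Rightarrow> bool" where
  "is_radial par \<longleftrightarrow> (\<forall>i. \<exists>k. par_iter par k i = None)"

definition path_lines :: "('n \<Rightarrow> 'n option) \<Rightarrow> 'n \<Rightarrow> 'n set" where
  "path_lines par i = {j. \<exists>k. par_iter par k i = Some j}"

definition reactance_matrix :: "('n::finite \<Rightarrow> 'n option) \<Rightarrow> ('n \<Rightarrow> real) \<Rightarrow> real^'n^'n" where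
  "reactance_matrix par x = (\<chi> i j. 2 * (\<Sum>e\<in>path_lines par i \<inter> path_lines par j. x e))"

definition safe_set :: "('n::finite \<Rightarrow> real) \<Rightarrow> ('n \<Rightarrow> real) \<Rightarrow> (real^'n) set" where
  "safe_set vlo vhi = {v. \<forall>i. vlo i \<le> v $ i \<and> v $ i \<le> vhi i}"

end

theory Submission
  imports Defs
begin

(* With \<Phi>\<^sub>i the primitive of -g\<^sub>i vanishing at the lower bound, W(t) = \<Sum>\<^sub>i \<Phi>\<^sub>i(v\<^sub>i(t))
  is a Lyapunov function: along trajectories W' = -u \<bullet> X u for the control u = g(v), and X is
  positive definite on a tree, since u \<bullet> X u = 2 \<Sum>\<^sub>e x\<^sub>e (sum of u over the nodes below line e)\<^sup>2.
  The potentials vanish on the deadbands and grow at least linearly outside them, so W bounds the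
  voltages, hence the control and the speed of the voltages. While a voltage is \<epsilon>-far from its
  band, -W' is bounded below, and by the speed bound this persists for a time span of fixed
  length; as W \<ge> 0 this can only happen at bounded times. *)

section \<open>Positive definiteness of the reactance matrix\<close>

lemma par_iter_add: "par_iter par (k + m) i = Option.bind (par_iter par k i) (par_iter par m)"
  by (induction m) (auto simp: Option.bind_assoc)

lemma mem_path_lines_self: "i \<in> path_lines par i"
  unfolding path_lines_def by (auto intro: exI[of _ 0])

definition depth :: "('n \<Rightarrow> 'n option) \<Rightarrow> 'n \<Rightarrow> nat" where
  "depth par i = (LEAST k. par_iter par k i = None)"

lemma depth_less_if_mem_path_lines:
  assumes "is_radial par" and "e \<in> path_lines par i" and "e \<noteq> i"
  shows "depth par e < depth par i"
proof -
  obtain k where k: "par_iter par k i = Some e"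
    using assms(2) by (auto simp: path_lines_def)
  with assms(3) have "k > 0" by (cases k) auto
  have i_root: "par_iter par (depth par i) i = None"
    unfolding depth_def by (rule LeastI_ex) (use assms(1) in \<open>auto simp: is_radial_def\<close>)
  have "k < depth par i"
  proof (rule ccontr)
    assume "\<not> k < depth par i"
    then have "par_iter par k i = Option.bind (par_iter par (depth par i) i) (par_iter par (k - depth par i))"
      by (metis le_add_diff_inverse not_less par_iter_add)
    with k i_root show False by simp
  qed
  then have "par_iter par (depth par i - k) e = None"
    using i_root k par_iter_add[of par k "depth par i - k" i] by simp
  then have "depth par e \<le> depth par i - k"
    unfolding depth_def by (rule Least_le)
  with \<open>k > 0\<close> \<open>k < depth par i\<close> show ?thesis by linarith
qed

lemma reactance_matrix_quadratic_form:
  fixes y :: "real^'n::finite"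
  shows "y \<bullet> (reactance_matrix par x *v y)
       = 2 * (\<Sum>e\<in>UNIV. x e * (\<Sum>i | e \<in> path_lines par i. y $ i)\<^sup>2)"
proof -
  let ?P = "path_lines par"
  define z where "z e i = (if e \<in> ?P i then y $ i else 0)" for e i
  have path_sum: "(\<Sum>i | e \<in> ?P i. y $ i) = (\<Sum>i\<in>UNIV. z e i)" for e
    by (simp add: z_def sum.If_cases)
  have pair: "y $ i * (\<Sum>e\<in>?P i \<inter> ?P j. x e) * y $ j = (\<Sum>e\<in>UNIV. x e * (z e i * z e j))" for i j
  proof -
    have "(\<Sum>e\<in>UNIV. x e * (z e i * z e j)) = (\<Sum>e\<in>?P i \<inter> ?P j. x e * (y $ i * y $ j))"
      by (rule sum.mono_neutral_cong_right) (auto simp: z_def)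
    also have "\<dots> = (\<Sum>e\<in>?P i \<inter> ?P j. x e) * (y $ i * y $ j)"
      by (rule sum_distrib_right[symmetric])
    finally show ?thesis by simp
  qed
  have "y \<bullet> (reactance_matrix par x *v y)
      = (\<Sum>i\<in>UNIV. \<Sum>j\<in>UNIV. 2 * (y $ i * (\<Sum>e\<in>?P i \<inter> ?P j. x e) * y $ j))"
    unfolding inner_vec_def matrix_vector_mult_def reactance_matrix_def
    by (simp add: sum_distrib_left mult_ac)
  also have "\<dots> = (\<Sum>i\<in>UNIV. \<Sum>j\<in>UNIV. \<Sum>e\<in>UNIV. 2 * (x e * (z e i * z e j)))"
    by (intro sum.cong refl) (simp only: pair, rule sum_distrib_left)
  also have "\<dots> = (\<Sum>e\<in>UNIV. \<Sum>i\<in>UNIV. \<Sum>j\<in>UNIV. 2 * (x e * (z e i * z e j)))"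
    by (subst sum.swap, rule sum.cong, rule refl, rule sum.swap)
  also have "\<dots> = 2 * (\<Sum>e\<in>UNIV. x e * (\<Sum>i\<in>UNIV. z e i)\<^sup>2)"
  proof -
    have "x e * (\<Sum>i\<in>UNIV. z e i)\<^sup>2 = (\<Sum>i\<in>UNIV. \<Sum>j\<in>UNIV. x e * (z e i * z e j))" for e
      unfolding power2_eq_square sum_product by (simp only: sum_distrib_left)
    then show ?thesis
      by (simp only: sum_distrib_left)
  qed
  finally show ?thesis by (simp add: path_sum)
qed

lemma reactance_matrix_pos_def:
  fixes y :: "real^'n::finite"
  assumes tree: "is_radial par" and x_pos: "\<And>e. 0 < x e" and "y \<noteq> 0"
  shows "0 < y \<bullet> (reactance_matrix par x *v y)"
proof -
  let ?P = "path_lines par"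
  define S where "S = {i. y $ i \<noteq> 0}"
  have "S \<noteq> {}"
    using \<open>y \<noteq> 0\<close> by (auto simp: S_def vec_eq_iff)
  \<comment> \<open>Below a deepest node e with y e \<noteq> 0 all entries of y vanish, so line e
    contributes x e * (y e)^2.\<close>
  then obtain e where "e \<in> S" and deepest: "\<And>i. i \<in> S \<Longrightarrow> depth par i \<le> depth par e"
    using Max_in[of "depth par ` S"] Max_ge[of "depth par ` S"] by fastforce
  have below_e: "y $ i = 0" if "e \<in> ?P i" "e \<noteq> i" for i
  proof -
    have "depth par e < depth par i"
      using depth_less_if_mem_path_lines[OF tree that] .
    then have "i \<notin> S"
      using deepest[of i] by linarith
    then show ?thesis
      by (simp add: S_def)
  qed
  have "(\<Sum>i | e \<in> ?P i. y $ i) = y $ e + (\<Sum>i \<in> {i. e \<in> ?P i} - {e}. y $ i)"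
    by (rule sum.remove) (auto simp: mem_path_lines_self)
  also have "\<dots> = y $ e"
    by (subst sum.neutral) (auto intro: below_e)
  finally have "0 < x e * (\<Sum>i | e \<in> ?P i. y $ i)\<^sup>2"
    using \<open>e \<in> S\<close> x_pos[of e] by (simp add: S_def)
  then have "0 < (\<Sum>e\<in>UNIV. x e * (\<Sum>i | e \<in> ?P i. y $ i)\<^sup>2)"
    using x_pos by (intro sum_pos2[where i = e]) (auto intro!: mult_nonneg_nonneg simp: less_imp_le)
  then show ?thesis
    by (simp add: reactance_matrix_quadratic_form)
qed

lemma pos_def_imp_coercive:
  fixes A :: "real^'n::finite^'n"
  assumes pos_def: "\<And>y. y \<noteq> 0 \<Longrightarrow> 0 < y \<bullet> (A *v y)"
  obtains c where "0 < c" and "\<And>y. c * (norm y)\<^sup>2 \<le> y \<bullet> (A *v y)"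
proof -
  let ?Q = "\<lambda>y::real^'n. y \<bullet> (A *v y)"
  have "continuous_on (sphere 0 1) ?Q"
    by (intro continuous_intros linear_continuous_on matrix_vector_mul_bounded_linear)
  moreover have "sphere (0::real^'n) 1 \<noteq> {}"
    using vector_choose_size[of 1] by auto
  ultimately obtain u where u: "u \<in> sphere 0 1" and u_min: "\<And>y. y \<in> sphere 0 1 \<Longrightarrow> ?Q u \<le> ?Q y"
    using continuous_attains_inf[OF compact_sphere] by blast
  have "?Q u * (norm y)\<^sup>2 \<le> ?Q y" for y
  proof (cases "y = 0")
    case False
    then have "?Q y = (norm y)\<^sup>2 * ?Q (y /\<^sub>R norm y)"
      by (simp add: matrix_vector_mult_scaleR field_simps power2_eq_square)
    moreover have "?Q u \<le> ?Q (y /\<^sub>R norm y)"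
      using False by (intro u_min) simp
    ultimately show ?thesis
      by (metis mult.commute mult_left_mono zero_le_power2)
  qed simp
  moreover have "0 < ?Q u"
    using u by (intro pos_def) auto
  ultimately show thesis
    using that by blast
qed

section \<open>Deadband policies and their potentials\<close>

lemma continuous_imp_ex_antiderivative:
  fixes f :: "real \<Rightarrow> real"
  assumes "\<And>s. isCont f s"
  obtains F where "\<And>s. (F has_real_derivative f s) (at s)"
proof -
  have "\<exists>F. \<forall>s::real. (-\<infinity>::ereal) < s \<longrightarrow> s < \<infinity> \<longrightarrow> (F has_vector_derivative f s) (at s)"
    by (rule einterval_antiderivative) (use assms in auto)
  then show thesis
    using that by (auto simp: has_real_derivative_iff_has_vector_derivative)
qed

locale deadband_policy =
  fixes lo hi :: real and g :: "real \<Rightarrow> real"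
  assumes lo_le_hi: "lo \<le> hi"
    and g_band: "\<And>v. lo \<le> v \<Longrightarrow> v \<le> hi \<Longrightarrow> g v = 0"
    and g_decreasing_below: "\<And>a b. a < b \<Longrightarrow> b \<le> lo \<Longrightarrow> g b < g a"
    and g_decreasing_above: "\<And>a b. hi \<le> a \<Longrightarrow> a < b \<Longrightarrow> g b < g a"
begin

lemma g_antimono_below: "a \<le> b \<Longrightarrow> b \<le> lo \<Longrightarrow> g b \<le> g a"
  using g_decreasing_below[of a b] by (cases "a = b") auto

lemma g_antimono_above: "hi \<le> a \<Longrightarrow> a \<le> b \<Longrightarrow> g b \<le> g a"
  using g_decreasing_above[of a b] by (cases "a = b") auto

lemma g_pos_below: "v < lo \<Longrightarrow> 0 < g v"
  using g_decreasing_below[of v lo] g_band[of lo] lo_le_hi by simp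

lemma g_neg_above: "hi < v \<Longrightarrow> g v < 0"
  using g_decreasing_above[of hi v] g_band[of hi] lo_le_hi by simp

lemma g_nonneg_below: "v \<le> lo \<Longrightarrow> 0 \<le> g v"
  using g_pos_below[of v] g_band[of lo] lo_le_hi by (cases "v = lo") auto

lemma g_nonpos_above: "hi \<le> v \<Longrightarrow> g v \<le> 0"
  using g_neg_above[of v] g_band[of hi] lo_le_hi by (cases "v = hi") auto

lemma infdist_band_geD:
  assumes "\<epsilon> \<le> infdist v {lo..hi}" and "0 < \<epsilon>"
  shows "v \<le> lo - \<epsilon> \<or> hi + \<epsilon> \<le> v"
proof (rule ccontr)
  assume "\<not> ?thesis"
  then have "dist v (max lo (min hi v)) < \<epsilon>"
    using lo_le_hi \<open>0 < \<epsilon>\<close> by (auto simp: dist_real_def)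
  moreover have "infdist v {lo..hi} \<le> dist v (max lo (min hi v))"
    using lo_le_hi by (intro infdist_le) auto
  ultimately show False
    using assms(1) by linarith
qed

lemma abs_g_ge_away_from_band:
  assumes "0 < \<epsilon>"
  obtains \<eta> where "0 < \<eta>" and "\<And>v. \<epsilon> \<le> infdist v {lo..hi} \<Longrightarrow> \<eta> \<le> \<bar>g v\<bar>"
proof
  show "0 < min (g (lo - \<epsilon>)) (- g (hi + \<epsilon>))"
    using g_pos_below[of "lo - \<epsilon>"] g_neg_above[of "hi + \<epsilon>"] assms by simp
  fix v assume "\<epsilon> \<le> infdist v {lo..hi}"
  then consider "v \<le> lo - \<epsilon>" | "hi + \<epsilon> \<le> v"
    using infdist_band_geD assms by blast
  then show "min (g (lo - \<epsilon>)) (- g (hi + \<epsilon>)) \<le> \<bar>g v\<bar>"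
  proof cases
    case 1
    then show ?thesis
      using g_antimono_below[of v "lo - \<epsilon>"] g_pos_below[of "lo - \<epsilon>"] assms by simp
  next
    case 2
    then show ?thesis
      using g_antimono_above[of "hi + \<epsilon>" v] g_neg_above[of "hi + \<epsilon>"] assms by simp
  qed
qed

lemma ex_potential:
  assumes "\<And>v. isCont g v"
  obtains \<Phi> where "\<Phi> lo = 0" and "\<And>v. (\<Phi> has_real_derivative - g v) (at v)"
proof -
  obtain F where F: "\<And>v. (F has_real_derivative - g v) (at v)"
    using continuous_imp_ex_antiderivative[of "\<lambda>v. - g v"] assms by (auto intro: continuous_intros)
  show thesis
    by (rule that[of "\<lambda>v. F v - F lo"]) (auto intro!: derivative_eq_intros F)
qed

context
  fixes \<Phi> :: "real \<Rightarrow> real"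
  assumes \<Phi>_lo: "\<Phi> lo = 0"
    and \<Phi>_deriv: "\<And>v. (\<Phi> has_real_derivative - g v) (at v)"
begin

lemma potential_minus_linear_deriv: "((\<lambda>v. \<Phi> v - m * v) has_real_derivative - g v - m) (at v)"
  by (auto intro!: derivative_eq_intros \<Phi>_deriv)

lemma potential_slope_ge:
  assumes "a \<le> b" and "\<And>v. a \<le> v \<Longrightarrow> v \<le> b \<Longrightarrow> m \<le> - g v"
  shows "\<Phi> a + m * (b - a) \<le> \<Phi> b"
proof -
  have "\<Phi> a - m * a \<le> \<Phi> b - m * b"
    using DERIV_nonneg_imp_nondecreasing[OF \<open>a \<le> b\<close>, of "\<lambda>v. \<Phi> v - m * v"]
      potential_minus_linear_deriv assms(2) by force
  then show ?thesis
    by (simp add: algebra_simps)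
qed

lemma potential_slope_le:
  assumes "a \<le> b" and "\<And>v. a \<le> v \<Longrightarrow> v \<le> b \<Longrightarrow> - g v \<le> m"
  shows "\<Phi> b \<le> \<Phi> a + m * (b - a)"
proof -
  have "\<Phi> b - m * b \<le> \<Phi> a - m * a"
    using DERIV_nonpos_imp_nonincreasing[OF \<open>a \<le> b\<close>, of "\<lambda>v. \<Phi> v - m * v"]
      potential_minus_linear_deriv assms(2) by force
  then show ?thesis
    by (simp add: algebra_simps)
qed

lemma potential_nonneg: "0 \<le> \<Phi> v"
proof (cases "lo \<le> v")
  case True
  then show ?thesis
    using potential_slope_ge[of lo v 0] g_band g_nonpos_above \<Phi>_lo by force
next
  case False
  then show ?thesis
    using potential_slope_le[of v lo 0] g_nonneg_below \<Phi>_lo by force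
qed

lemma potential_sublevel_le_upper:
  assumes "\<Phi> v \<le> C"
  shows "v \<le> hi + 1 + C / - g (hi + 1)"
proof -
  have "0 < - g (hi + 1)"
    using g_neg_above[of "hi + 1"] by simp
  show ?thesis
  proof (cases "hi + 1 \<le> v")
    case True
    then have "- g (hi + 1) * (v - (hi + 1)) \<le> C"
      using potential_slope_ge[OF True, of "- g (hi + 1)"] g_antimono_above[of "hi + 1"]
        potential_nonneg[of "hi + 1"] assms by force
    then show ?thesis
      using \<open>0 < - g (hi + 1)\<close> by (simp add: field_simps)
  next
    case False
    moreover have "0 \<le> C / - g (hi + 1)"
      using \<open>0 < - g (hi + 1)\<close> potential_nonneg[of v] assms by (intro divide_nonneg_pos) auto
    ultimately show ?thesis
      by linarith
  qed
qed

lemma potential_sublevel_ge_lower: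
  assumes "\<Phi> v \<le> C"
  shows "lo - 1 - C / g (lo - 1) \<le> v"
proof -
  have "0 < g (lo - 1)"
    using g_pos_below[of "lo - 1"] by simp
  show ?thesis
  proof (cases "v \<le> lo - 1")
    case True
    then have "g (lo - 1) * ((lo - 1) - v) \<le> C"
      using potential_slope_le[OF True, of "- g (lo - 1)"] g_antimono_below[where b = "lo - 1"]
        potential_nonneg[of "lo - 1"] assms by force
    then show ?thesis
      using \<open>0 < g (lo - 1)\<close> by (simp add: field_simps)
  next
    case False
    moreover have "0 \<le> C / g (lo - 1)"
      using \<open>0 < g (lo - 1)\<close> potential_nonneg[of v] assms by (intro divide_nonneg_pos) auto
    ultimately show ?thesis
      by linarith
  qed
qed

lemma potential_sublevel_bounded:
  obtains a b where "\<And>v. \<Phi> v \<le> C \<Longrightarrow> a \<le> v \<and> v \<le> b"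
  using potential_sublevel_le_upper potential_sublevel_ge_lower by blast

end

end

section \<open>Convergence under uniform dissipation\<close>

lemma has_real_derivative_le_imp_diff_le:
  fixes f f' :: "real \<Rightarrow> real"
  assumes "a \<le> b" and "{a..b} \<subseteq> S"
    and deriv: "\<And>t. a \<le> t \<Longrightarrow> t \<le> b \<Longrightarrow> (f has_real_derivative f' t) (at t within S)"
    and bound: "\<And>t. a \<le> t \<Longrightarrow> t \<le> b \<Longrightarrow> f' t \<le> B"
  shows "f b - f a \<le> B * (b - a)"
proof -
  have "\<exists>t\<in>{a..b}. f b - f a = f' t * (b - a)"
    using \<open>a \<le> b\<close>
  proof (rule mvt_very_simple)
    show "(f has_derivative (*) (f' t)) (at t within {a..b})" if "a \<le> t" "t \<le> b" for t
      using has_field_derivative_subset[OF deriv[OF that] \<open>{a..b} \<subseteq> S\<close>]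
      by (simp add: has_field_derivative_def)
  qed
  then show ?thesis
    using bound \<open>a \<le> b\<close> by (metis atLeastAtMost_iff diff_ge_0_iff_ge mult_right_mono)
qed

lemma dissipation_imp_tendsto_zero:
  fixes W D d :: "real \<Rightarrow> real"
  assumes W_deriv: "\<And>t. 0 \<le> t \<Longrightarrow> (W has_real_derivative - D t) (at t within {0..})"
    and D_nonneg: "\<And>t. 0 \<le> t \<Longrightarrow> 0 \<le> D t"
    and W_bdd: "bdd_below (W ` {0..})"
    and d_nonneg: "\<And>t. 0 \<le> d t"
    and d_lipschitz: "\<And>s t. 0 \<le> t \<Longrightarrow> t \<le> s \<Longrightarrow> \<bar>d s - d t\<bar> \<le> L * (s - t)"
    and D_large: "\<And>\<epsilon>. 0 < \<epsilon> \<Longrightarrow> \<exists>\<kappa>>0. \<forall>t\<ge>0. \<epsilon> \<le> d t \<longrightarrow> \<kappa> \<le> D t"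
  shows "(d \<longlongrightarrow> 0) at_top"
proof (rule tendstoI)
  \<comment> \<open>Each time d t \<ge> \<epsilon>, d stays \<ge> \<epsilon>/2 on [t, t + \<delta>] and W drops by \<kappa> * \<delta>; this is
    impossible once W is within \<kappa> * \<delta> of its infimum.\<close>
  fix \<epsilon> :: real assume "0 < \<epsilon>"
  obtain \<kappa> where "0 < \<kappa>" and \<kappa>: "\<And>t. 0 \<le> t \<Longrightarrow> \<epsilon> / 2 \<le> d t \<Longrightarrow> \<kappa> \<le> D t"
    using D_large[of "\<epsilon> / 2"] \<open>0 < \<epsilon>\<close> by auto
  have "0 \<le> L"
    using d_lipschitz[of 0 1] by simp
  define \<delta> where "\<delta> = \<epsilon> / (2 * (L + 1))"
  have "0 < \<delta>" and "L * \<delta> \<le> \<epsilon> / 2"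
    using \<open>0 < \<epsilon>\<close> \<open>0 \<le> L\<close> by (auto simp: \<delta>_def field_simps)
  have W_antimono: "W t \<le> W s" if "0 \<le> s" "s \<le> t" for s t
    using has_real_derivative_le_imp_diff_le[OF that(2), of "{0..}" W "\<lambda>t. - D t" 0]
      W_deriv D_nonneg that by force
  have W_drop: "W (t + \<delta>) \<le> W t - \<kappa> * \<delta>" if "0 \<le> t" and "\<epsilon> \<le> d t" for t
  proof -
    have "\<epsilon> / 2 \<le> d s" if "t \<le> s" "s \<le> t + \<delta>" for s
    proof -
      have "\<bar>d s - d t\<bar> \<le> L * \<delta>"
        using d_lipschitz[of t s] \<open>0 \<le> t\<close> \<open>0 \<le> L\<close> that mult_left_mono[of "s - t" \<delta> L] by force
      then show ?thesis
        using \<open>\<epsilon> \<le> d t\<close> \<open>L * \<delta> \<le> \<epsilon> / 2\<close> by linarith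
    qed
    then have "W (t + \<delta>) - W t \<le> - \<kappa> * (t + \<delta> - t)"
      using \<open>0 \<le> t\<close> \<open>0 < \<delta>\<close> W_deriv \<kappa>
      by (intro has_real_derivative_le_imp_diff_le[of _ _ "{0..}" W "\<lambda>t. - D t"]) force+
    then show ?thesis
      by simp
  qed
  define m where "m = Inf (W ` {0..})"
  obtain t\<^sub>0 where "0 \<le> t\<^sub>0" and "W t\<^sub>0 < m + \<kappa> * \<delta>"
    using cInf_lessD[of "W ` {0..}" "m + \<kappa> * \<delta>"] \<open>0 < \<kappa>\<close> \<open>0 < \<delta>\<close> by (auto simp: m_def)
  have "d t < \<epsilon>" if "t\<^sub>0 \<le> t" for t
  proof (rule ccontr)
    assume "\<not> d t < \<epsilon>"
    then have "W (t + \<delta>) \<le> W t\<^sub>0 - \<kappa> * \<delta>"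
      using W_drop[of t] W_antimono[of t\<^sub>0 t] \<open>0 \<le> t\<^sub>0\<close> that by force
    also have "\<dots> < m"
      using \<open>W t\<^sub>0 < m + \<kappa> * \<delta>\<close> by simp
    also have "m \<le> W (t + \<delta>)"
      unfolding m_def using W_bdd \<open>0 \<le> t\<^sub>0\<close> \<open>0 < \<delta>\<close> that by (intro cInf_lower) auto
    finally show False
      by simp
  qed
  then show "\<forall>\<^sub>F t in at_top. dist (d t) 0 < \<epsilon>"
    using d_nonneg by (auto simp: eventually_at_top_linorder intro!: exI[of _ t\<^sub>0])
qed

section \<open>The closed loop\<close>

lemma abs_infdist_diff_le: "\<bar>infdist x A - infdist y A\<bar> \<le> dist x y"
  using infdist_triangle[of x A y] infdist_triangle[of y A x] by (simp add: dist_commute)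

lemma infdist_safe_set_le:
  assumes "\<And>i. vlo i \<le> vhi i"
  shows "infdist v (safe_set vlo vhi) \<le> (\<Sum>i\<in>UNIV. infdist (v $ i) {vlo i..vhi i})"
proof -
  have "\<exists>p. p \<in> {vlo i..vhi i} \<and> infdist (v $ i) {vlo i..vhi i} = dist (v $ i) p" for i
    using infdist_attains_inf[of "{vlo i..vhi i}" "v $ i"] assms[of i] by auto
  then obtain p where p: "\<And>i. p i \<in> {vlo i..vhi i}"
    and p_nearest: "\<And>i. infdist (v $ i) {vlo i..vhi i} = dist (v $ i) (p i)"
    by metis
  have "(\<chi> i. p i) \<in> safe_set vlo vhi"
    using p by (simp add: safe_set_def)
  then have "infdist v (safe_set vlo vhi) \<le> norm (v - (\<chi> i. p i))"
    by (metis infdist_le dist_norm)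
  also have "\<dots> \<le> (\<Sum>i\<in>UNIV. \<bar>v $ i - p i\<bar>)"
    using norm_le_l1_cart[of "v - (\<chi> i. p i)"] by simp
  finally show ?thesis
    by (simp add: p_nearest dist_real_def)
qed

locale deadband_closed_loop =
  fixes X :: "real^'n::finite^'n"
    and vlo vhi :: "'n \<Rightarrow> real"
    and g :: "'n \<Rightarrow> real \<Rightarrow> real"
    and venv :: "real^'n"
    and q :: "real \<Rightarrow> real^'n"
  assumes X_pos_def: "\<And>y. y \<noteq> 0 \<Longrightarrow> 0 < y \<bullet> (X *v y)"
    and policy: "\<And>i. deadband_policy (vlo i) (vhi i) (g i)"
    and g_cont: "\<And>i v. isCont (g i) v"
    and q_deriv: "\<And>t. 0 \<le> t \<Longrightarrow>
       (q has_vector_derivative (\<chi> i. g i ((X *v q t + venv) $ i))) (at t within {0..})"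
begin

definition voltage :: "real \<Rightarrow> real^'n" where
  "voltage t = X *v q t + venv"

definition control :: "real^'n \<Rightarrow> real^'n" where
  "control v = (\<chi> i. g i (v $ i))"

definition dissipation :: "real^'n \<Rightarrow> real" where
  "dissipation v = control v \<bullet> (X *v control v)"

definition potential :: "'n \<Rightarrow> real \<Rightarrow> real" where
  "potential i = (SOME \<Phi>. \<Phi> (vlo i) = 0 \<and> (\<forall>v. (\<Phi> has_real_derivative - g i v) (at v)))"

definition lyapunov :: "real \<Rightarrow> real" where
  "lyapunov t = (\<Sum>i\<in>UNIV. potential i (voltage t $ i))"

lemma potential_spec: "potential i (vlo i) = 0" "(potential i has_real_derivative - g i v) (at v)"
proof -
  have "\<exists>\<Phi>. \<Phi> (vlo i) = 0 \<and> (\<forall>v. (\<Phi> has_real_derivative - g i v) (at v))"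
    using deadband_policy.ex_potential[OF policy g_cont] by metis
  from someI_ex[OF this] show "potential i (vlo i) = 0" "(potential i has_real_derivative - g i v) (at v)"
    unfolding potential_def by blast+
qed

lemma potential_nonneg: "0 \<le> potential i v"
  using deadband_policy.potential_nonneg[OF policy potential_spec] .

lemma lyapunov_nonneg: "0 \<le> lyapunov t"
  unfolding lyapunov_def by (intro sum_nonneg potential_nonneg)

lemma dissipation_coercive:
  obtains c where "0 < c" and "\<And>v. c * (norm (control v))\<^sup>2 \<le> dissipation v"
  using pos_def_imp_coercive[OF X_pos_def] unfolding dissipation_def by metis

lemma dissipation_nonneg: "0 \<le> dissipation v"
  using X_pos_def[of "control v"] by (cases "control v = 0") (auto simp: dissipation_def)

lemma voltage_deriv:
  assumes "0 \<le> t"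
  shows "(voltage has_vector_derivative X *v control (voltage t)) (at t within {0..})"
proof -
  have "(q has_vector_derivative control (voltage t)) (at t within {0..})"
    using q_deriv[OF assms] by (simp add: control_def voltage_def)
  then have "((\<lambda>t. X *v q t) has_vector_derivative X *v control (voltage t)) (at t within {0..})"
    by (rule bounded_linear.has_vector_derivative[OF matrix_vector_mul_bounded_linear])
  then show ?thesis
    unfolding voltage_def[abs_def] has_vector_derivative_add_const .
qed

lemma lyapunov_deriv:
  assumes "0 \<le> t"
  shows "(lyapunov has_real_derivative - dissipation (voltage t)) (at t within {0..})"
proof -
  have "((\<lambda>t. voltage t $ i) has_real_derivative (X *v control (voltage t)) $ i) (at t within {0..})" for i
    using bounded_linear.has_vector_derivative[OF bounded_linear_vec_nth voltage_deriv[OF assms]]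
    by (simp add: has_real_derivative_iff_has_vector_derivative)
  then have "(lyapunov has_real_derivative
      (\<Sum>i\<in>UNIV. - g i (voltage t $ i) * (X *v control (voltage t)) $ i)) (at t within {0..})"
    unfolding lyapunov_def[abs_def] by (intro DERIV_sum DERIV_chain2[OF potential_spec(2)])
  then show ?thesis
    by (simp add: dissipation_def inner_vec_def control_def sum_negf)
qed

lemma lyapunov_le_initial:
  assumes "0 \<le> t"
  shows "lyapunov t \<le> lyapunov 0"
  using has_real_derivative_le_imp_diff_le[OF assms, of "{0..}" lyapunov "\<lambda>t. - dissipation (voltage t)" 0]
    lyapunov_deriv dissipation_nonneg by force

lemma voltage_bounded:
  obtains a b where "\<And>t. 0 \<le> t \<Longrightarrow> voltage t \<in> cbox a b"
proof -
  have "\<exists>a b. \<forall>v. potential i v \<le> lyapunov 0 \<longrightarrow> a \<le> v \<and> v \<le> b" for i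
    using deadband_policy.potential_sublevel_bounded[OF policy potential_spec] by metis
  then obtain a b where ab: "\<And>i v. potential i v \<le> lyapunov 0 \<Longrightarrow> a i \<le> v \<and> v \<le> b i"
    by metis
  have "potential i (voltage t $ i) \<le> lyapunov 0" if "0 \<le> t" for i t
  proof -
    have "potential i (voltage t $ i) \<le> lyapunov t"
      unfolding lyapunov_def by (rule member_le_sum) (auto intro: potential_nonneg)
    then show ?thesis
      using lyapunov_le_initial[OF that] by linarith
  qed
  then have "voltage t \<in> cbox (\<chi> i. a i) (\<chi> i. b i)" if "0 \<le> t" for t
    using ab that by (simp add: mem_box_cart)
  then show thesis
    using that by blast
qed

lemma velocity_bounded:
  obtains B where "\<And>t. 0 \<le> t \<Longrightarrow> norm (X *v control (voltage t)) \<le> B"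
proof -
  obtain a b where ab: "\<And>t. 0 \<le> t \<Longrightarrow> voltage t \<in> cbox a b"
    using voltage_bounded by metis
  have "continuous_on UNIV control"
    unfolding control_def
    by (intro continuous_on_vec_lambda continuous_at_imp_continuous_on ballI isCont_o2[OF _ g_cont]
        continuous_intros)
  then have "continuous_on (cbox a b) (\<lambda>v. X *v control v)"
    by (intro continuous_on_compose2[OF linear_continuous_on[OF matrix_vector_mul_bounded_linear]
          continuous_on_subset]) auto
  then have "bounded ((\<lambda>v. X *v control v) ` cbox a b)"
    by (intro compact_imp_bounded compact_continuous_image compact_cbox)
  then show thesis
    using that ab unfolding bounded_iff by blast
qed

lemma voltage_lipschitz:
  obtains L where "\<And>s t. 0 \<le> t \<Longrightarrow> t \<le> s \<Longrightarrow> norm (voltage s - voltage t) \<le> L * (s - t)"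
proof -
  obtain B where B: "\<And>t. 0 \<le> t \<Longrightarrow> norm (X *v control (voltage t)) \<le> B"
    using velocity_bounded by metis
  have "norm (voltage s - voltage t) \<le> B * norm (s - t)" if "0 \<le> t" "t \<le> s" for s t
  proof (rule differentiable_bound[where S = "{0..}"])
    show "(voltage has_derivative (\<lambda>h. h *\<^sub>R (X *v control (voltage r)))) (at r within {0..})"
      if "r \<in> {0..}" for r
      using voltage_deriv[of r] that by (simp add: has_vector_derivative_def)
    show "onorm (\<lambda>h. h *\<^sub>R (X *v control (voltage r))) \<le> B" if "r \<in> {0..}" for r
      using B[of r] that by (simp add: onorm_scaleR_left onorm_id bounded_linear_ident)
  qed (use that in auto)
  then show thesis
    using that by force
qed

lemma dissipation_large_away_from_band:
  assumes "0 < \<epsilon>"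
  obtains \<kappa> where "0 < \<kappa>" and "\<And>v. \<epsilon> \<le> infdist (v $ i) {vlo i..vhi i} \<Longrightarrow> \<kappa> \<le> dissipation v"
proof -
  obtain c where "0 < c" and c: "\<And>v. c * (norm (control v))\<^sup>2 \<le> dissipation v"
    using dissipation_coercive by metis
  obtain \<eta> where "0 < \<eta>" and \<eta>: "\<And>s. \<epsilon> \<le> infdist s {vlo i..vhi i} \<Longrightarrow> \<eta> \<le> \<bar>g i s\<bar>"
    using deadband_policy.abs_g_ge_away_from_band[OF policy assms] by metis
  show thesis
  proof
    show "0 < c * \<eta>\<^sup>2"
      using \<open>0 < c\<close> \<open>0 < \<eta>\<close> by simp
    fix v assume "\<epsilon> \<le> infdist (v $ i) {vlo i..vhi i}"
    then have "\<eta> \<le> norm (control v)"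
      using \<eta> component_le_norm_cart[of "control v" i] by (force simp: control_def)
    then have "c * \<eta>\<^sup>2 \<le> c * (norm (control v))\<^sup>2"
      using \<open>0 < c\<close> \<open>0 < \<eta>\<close> by (simp add: power_mono)
    then show "c * \<eta>\<^sup>2 \<le> dissipation v"
      using c[of v] by linarith
  qed
qed

lemma infdist_band_tendsto_zero: "((\<lambda>t. infdist (voltage t $ i) {vlo i..vhi i}) \<longlongrightarrow> 0) at_top"
proof -
  obtain L where L: "\<And>s t. 0 \<le> t \<Longrightarrow> t \<le> s \<Longrightarrow> norm (voltage s - voltage t) \<le> L * (s - t)"
    using voltage_lipschitz by metis
  show ?thesis
  proof (rule dissipation_imp_tendsto_zero[where W = lyapunov and D = "\<lambda>t. dissipation (voltage t)"])
    show "bdd_below (lyapunov ` {0..})"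
      using lyapunov_nonneg by (intro bdd_belowI[of _ 0]) auto
    show "\<bar>infdist (voltage s $ i) {vlo i..vhi i} - infdist (voltage t $ i) {vlo i..vhi i}\<bar> \<le> L * (s - t)"
      if "0 \<le> t" "t \<le> s" for s t
      using abs_infdist_diff_le[of "voltage s $ i" "{vlo i..vhi i}" "voltage t $ i"]
        component_le_norm_cart[of "voltage s - voltage t" i] L[OF that]
      by (simp add: dist_real_def)
    show "\<exists>\<kappa>>0. \<forall>t\<ge>0. \<epsilon> \<le> infdist (voltage t $ i) {vlo i..vhi i} \<longrightarrow> \<kappa> \<le> dissipation (voltage t)"
      if "0 < \<epsilon>" for \<epsilon>
      using dissipation_large_away_from_band[OF that, of i] by metis
  qed (auto intro: lyapunov_deriv dissipation_nonneg infdist_nonneg)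
qed

lemma voltage_tendsto_safe_set: "((\<lambda>t. infdist (voltage t) (safe_set vlo vhi)) \<longlongrightarrow> 0) at_top"
proof (rule tendsto_sandwich[OF _ _ tendsto_const])
  show "\<forall>\<^sub>F t in at_top. 0 \<le> infdist (voltage t) (safe_set vlo vhi)"
    by (simp add: infdist_nonneg)
  show "\<forall>\<^sub>F t in at_top. infdist (voltage t) (safe_set vlo vhi)
      \<le> (\<Sum>i\<in>UNIV. infdist (voltage t $ i) {vlo i..vhi i})"
    using deadband_policy.lo_le_hi[OF policy] by (simp add: infdist_safe_set_le)
  show "((\<lambda>t. \<Sum>i\<in>UNIV. infdist (voltage t $ i) {vlo i..vhi i}) \<longlongrightarrow> 0) at_top"
    by (intro tendsto_null_sum infdist_band_tendsto_zero)
qed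

end

theorem theorem1:
  fixes par :: "'n::finite \<Rightarrow> 'n option"
    and x :: "'n \<Rightarrow> real"
    and vlo vhi :: "'n \<Rightarrow> real"
    and g :: "'n \<Rightarrow> real \<Rightarrow> real"
    and venv :: "real^'n"
    and q :: "real \<Rightarrow> real^'n"
  assumes tree: "is_radial par"
    and react_pos: "\<And>e. x e > 0"
    and bounds: "\<And>i. vlo i \<le> vhi i"
    and g_C1: "\<And>i. g i C1_differentiable_on UNIV"
    and g_dead: "\<And>i v. vlo i \<le> v \<Longrightarrow> v \<le> vhi i \<Longrightarrow> g i v = 0"
    and g_dec_lo: "\<And>i a b. a < b \<Longrightarrow> b \<le> vlo i \<Longrightarrow> g i a > g i b"
    and g_dec_hi: "\<And>i a b. vhi i \<le> a \<Longrightarrow> a < b \<Longrightarrow> g i a > g i b"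
    and g_unbdd: "\<And>i. filterlim (\<lambda>v. \<bar>g i v\<bar>) at_top at_top"
    and traj: "\<And>t. t \<ge> 0 \<Longrightarrow>
       (q has_vector_derivative
          (\<chi> i. g i ((reactance_matrix par x *v q t + venv) $ i))) (at t within {0..})"
  shows "((\<lambda>t. infdist (reactance_matrix par x *v q t + venv) (safe_set vlo vhi))
            \<longlongrightarrow> 0) at_top"
proof -
  interpret deadband_closed_loop "reactance_matrix par x" vlo vhi g venv q
  proof
    show "0 < y \<bullet> (reactance_matrix par x *v y)" if "y \<noteq> 0" for y
      using reactance_matrix_pos_def[OF tree react_pos that] .
    show "isCont (g i) v" for i v
      using g_C1[of i] by (simp add: C1_differentiable_on_eq differentiable_imp_continuous_within)
  qed (fact bounds g_dead g_dec_lo g_dec_hi traj)+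
  show ?thesis
    using voltage_tendsto_safe_set unfolding voltage_def .
qed

end
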